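(* Let $d\ge1$ and $k\ge d+2$ be integers. Let $\pi_1,\dots,\pi_k>0$ with $\sum_{i=1}^k\pi_i=1$, let $\mu_1,\dots,\mu_k\in\mathbb{R}^d$, and let \[\rho(x)=\sum_{i=1}^k \frac{\pi_i}{\sqrt{(2\pi)^d}}\,e^{-\frac12\|x-\mu_i\|^2},\qquad x\in\mathbb{R}^d.\] Assume that the distances $\|\mu_i-\mu_j\|$, $1\le i<j\le k$, are pairwise distinct, and that the configuration $(\mu_1,\dots,\mu_k)$ is reconstructible from its multiset of pairwise distances. Then $\rho$ is uniquely reconstructible, up to a rigid motion, from its distribution of distances: if $\bar\pi_1,\dots,\bar\pi_k>0$ with $\sum_i\bar\pi_i=1$, $\nu_1,\dots,\nu_k\in\mathbb{R}^d$, and $\bar\rho(x)=\sum_{i=1}^k\frac{\bar\pi_i}{\sqrt{(2\pi)^d}}e^{-\frac12\|x-\nu_i\|^2}$ has the same distribution of distances as $\rho$, then there exists $g\in E(d)$ with $\rho(x)=\bar\rho(g\cdot x)$ for all $x\in\mathbb{R}^d$.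
   Context: $E(d)$ denotes the Euclidean group of rigid motions of $\mathbb{R}^d$ and $\|\cdot\|$ the Euclidean norm. For a probability density $\rho$ on $\mathbb{R}^d$, its distribution of distances is the probability density $r(\Delta)$ of the random variable $\Delta=\|x_1-x_2\|^2$, where $x_1,x_2$ are drawn independently according to $\rho$. A point configuration $p_1,\dots,p_k\in\mathbb{R}^d$ is called reconstructible from its multiset of pairwise distances if for every configuration $q_1,\dots,q_k\in\mathbb{R}^d$ whose multiset of pairwise distances equals that of $p_1,\dots,p_k$, there exist $g\in E(d)$ and a permutation $\sigma$ of $\{1,\dots,k\}$ with $g\cdot p_{\sigma(i)}=q_i$ for all $i$. *)

theory Defs
  imports "HOL-Probability.Probability" "HOL-Library.Multiset"
begin

definition rigid_motion :: "('a::euclidean_space \<Rightarrow> 'a) \<Rightarrow> bool" where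
  "rigid_motion g \<longleftrightarrow> (\<exists>f b. orthogonal_transformation f \<and> (\<forall>x. g x = f x + b))"

definition gauss_mix :: "nat \<Rightarrow> (nat \<Rightarrow> real) \<Rightarrow> (nat \<Rightarrow> 'a::euclidean_space) \<Rightarrow> 'a \<Rightarrow> real" where
  "gauss_mix k w m x =
     (\<Sum>i<k. w i / sqrt ((2 * pi) ^ DIM('a)) * exp (- (1/2) * (norm (x - m i))\<^sup>2))"

definition dist_distr :: "('a::euclidean_space \<Rightarrow> real) \<Rightarrow> real measure" where
  "dist_distr rho =
     distr (density lborel (\<lambda>x. ennreal (rho x)) \<Otimes>\<^sub>M density lborel (\<lambda>x. ennreal (rho x)))
           borel (\<lambda>(x, y). (norm (x - y))\<^sup>2)"

definition pair_dists :: "nat \<Rightarrow> (nat \<Rightarrow> 'a::euclidean_space) \<Rightarrow> real multiset" where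
  "pair_dists k p = image_mset (\<lambda>(i, j). dist (p i) (p j)) (mset_set {(i, j). i < j \<and> j < k})"

definition reconstructible :: "nat \<Rightarrow> (nat \<Rightarrow> 'a::euclidean_space) \<Rightarrow> bool" where
  "reconstructible k p \<longleftrightarrow>
     (\<forall>q :: nat \<Rightarrow> 'a. pair_dists k q = pair_dists k p \<longrightarrow>
        (\<exists>g \<sigma>. rigid_motion g \<and> bij_betw \<sigma> {..<k} {..<k} \<and> (\<forall>i<k. g (p (\<sigma> i)) = q i)))"

end

theory Submission
  imports Defs
begin

(* The Laplace transform t \<mapsto> \<integral> e^(-t u) dr(u) of the distribution of distances r of a
   Gaussian mixture equals, up to a factor that does not depend on the mixture,
   \<Sum>i j. \<pi>_i \<pi>_j exp (-s |\<mu>_i - \<mu>_j|^2) with s = t / (4 t + 1): completing the square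
   turns every cross term into the centred one.  Linear independence of exponentials
   then recovers, for every value a, the total weight \<Sum> \<pi>_i \<pi>_j of the ordered pairs
   with |\<mu>_i - \<mu>_j|^2 = a.  Since the distances are pairwise distinct, a value coming
   from a pair i \<noteq> j carries exactly the weight 2 \<pi>_i \<pi>_j; so both configurations of means
   have the same multiset of distances, reconstructibility supplies a rigid motion and a
   matching of the means, and for k \<ge> 3 the products \<pi>_i \<pi>_j (i \<noteq> j) determine the weights. *)

definition gauss_kernel :: "'a::real_normed_vector \<Rightarrow> real" where
  "gauss_kernel x = exp (-(1/2) * (norm x)\<^sup>2)"

lemma gauss_kernel_pos: "gauss_kernel x > 0"
  by (simp add: gauss_kernel_def)

lemma gauss_kernel_measurable[measurable]: "gauss_kernel \<in> borel_measurable borel"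
  unfolding gauss_kernel_def by measurable

lemma gauss_mix_eq_sum_gauss_kernel:
  "gauss_mix k w m x = (\<Sum>i<k. w i / sqrt ((2 * pi) ^ DIM('a)) * gauss_kernel (x - m i :: 'a::euclidean_space))"
  by (simp add: gauss_mix_def gauss_kernel_def)

lemma gauss_mix_measurable[measurable]: "gauss_mix k w m \<in> borel_measurable borel"
  unfolding gauss_mix_def by measurable

definition gauss_pair_kernel :: "real \<Rightarrow> 'a::real_normed_vector \<times> 'a \<Rightarrow> real" where
  "gauss_pair_kernel t z =
     gauss_kernel (fst z) * gauss_kernel (snd z) * exp (- t * (norm (fst z - snd z))\<^sup>2)"

lemma gauss_pair_kernel_pos: "gauss_pair_kernel t z > 0"
  by (simp add: gauss_pair_kernel_def gauss_kernel_pos)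

lemma gauss_pair_kernel_measurable[measurable]:
  "gauss_pair_kernel t \<in> borel_measurable (borel :: ('a::euclidean_space \<times> 'a) measure)"
  unfolding gauss_pair_kernel_def gauss_kernel_def
  by (intro borel_measurable_continuous_onI continuous_intros)

lemma gauss_kernel_pair_shift:
  fixes x y a b :: "'a::real_inner"
  assumes "4 * t + 1 \<noteq> 0"
  defines "\<beta> \<equiv> 2 * t / (4 * t + 1)"
  shows "gauss_kernel (x - a) * gauss_kernel (y - b) * exp (- t * (norm (x - y))\<^sup>2) =
    exp (- (t / (4 * t + 1)) * (norm (a - b))\<^sup>2) *
    gauss_pair_kernel t ((x, y) - (a - \<beta> *\<^sub>R (a - b), b + \<beta> *\<^sub>R (a - b)))"
proof -
  define X Y m where "X = x - a" and "Y = y - b" and "m = a - b"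
  define s where "s = t / (4 * t + 1)"
  have \<beta>_eq: "\<beta> * (4 * t + 1) = 2 * t" and s_eq: "s * (4 * t + 1) = t"
    using assms by (simp_all add: \<beta>_def s_def)
  \<comment> \<open>\<open>\<beta>\<close> and \<open>s\<close> are chosen so that the terms linear in \<open>m\<close> cancel.\<close>
  have "t - s - 2 * t * \<beta> = 0"
    using assms by (simp add: \<beta>_def s_def field_simps)
  then have "(1/2) * (norm X)\<^sup>2 + (1/2) * (norm Y)\<^sup>2 + t * (norm (X - Y + m))\<^sup>2 =
     s * (norm m)\<^sup>2 + (1/2) * (norm (X + \<beta> *\<^sub>R m))\<^sup>2 + (1/2) * (norm (Y - \<beta> *\<^sub>R m))\<^sup>2
     + t * (norm (X + \<beta> *\<^sub>R m - (Y - \<beta> *\<^sub>R m)))\<^sup>2"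
    unfolding power2_norm_eq_inner
    by (simp add: inner_add_left inner_add_right inner_diff_left inner_diff_right inner_commute
        algebra_simps) (use \<beta>_eq s_eq in algebra)
  moreover have "gauss_kernel (x - a) * gauss_kernel (y - b) * exp (- t * (norm (x - y))\<^sup>2) =
      exp (- ((1/2) * (norm X)\<^sup>2 + (1/2) * (norm Y)\<^sup>2 + t * (norm (X - Y + m))\<^sup>2))"
    by (simp add: gauss_kernel_def mult_exp_exp X_def Y_def m_def algebra_simps)
  moreover have "gauss_pair_kernel t ((x, y) - (a - \<beta> *\<^sub>R m, b + \<beta> *\<^sub>R m)) =
      exp (- ((1/2) * (norm (X + \<beta> *\<^sub>R m))\<^sup>2 + (1/2) * (norm (Y - \<beta> *\<^sub>R m))\<^sup>2
        + t * (norm (X + \<beta> *\<^sub>R m - (Y - \<beta> *\<^sub>R m)))\<^sup>2))"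
    by (simp add: gauss_pair_kernel_def gauss_kernel_def mult_exp_exp X_def Y_def m_def algebra_simps)
  ultimately show ?thesis
    by (simp add: mult_exp_exp s_def m_def algebra_simps)
qed

section \<open>Gaussian integrals\<close>

lemma nn_integral_lborel_translate:
  fixes F :: "'a::euclidean_space \<Rightarrow> ennreal"
  assumes "F \<in> borel_measurable borel"
  shows "(\<integral>\<^sup>+z. F (z - c) \<partial>lborel) = (\<integral>\<^sup>+z. F z \<partial>lborel)"
proof -
  have "(\<integral>\<^sup>+z. F z \<partial>lborel) = (\<integral>\<^sup>+z. F z \<partial>distr lborel borel ((+) (- c)))"
    by (simp add: lborel_distr_plus)
  also have "\<dots> = (\<integral>\<^sup>+z. F (- c + z) \<partial>lborel)"
    using assms by (subst nn_integral_distr) auto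
  finally show ?thesis
    by simp
qed

lemma nn_integral_gauss_pair_shift:
  fixes a b :: "'a::euclidean_space"
  assumes "4 * t + 1 \<noteq> 0"
  shows "(\<integral>\<^sup>+z. ennreal (gauss_kernel (fst z - a) * gauss_kernel (snd z - b) *
      exp (- t * (norm (fst z - snd z))\<^sup>2)) \<partial>lborel) =
    ennreal (exp (- (t / (4 * t + 1)) * (norm (a - b))\<^sup>2)) *
    (\<integral>\<^sup>+z. ennreal (gauss_pair_kernel t z) \<partial>(lborel :: ('a \<times> 'a) measure))"
proof -
  define \<beta> where "\<beta> = 2 * t / (4 * t + 1)"
  define c where "c = (a - \<beta> *\<^sub>R (a - b), b + \<beta> *\<^sub>R (a - b))"
  have "(\<integral>\<^sup>+z. ennreal (gauss_kernel (fst z - a) * gauss_kernel (snd z - b) *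
      exp (- t * (norm (fst z - snd z))\<^sup>2)) \<partial>lborel) =
    (\<integral>\<^sup>+z. ennreal (exp (- (t / (4 * t + 1)) * (norm (a - b))\<^sup>2)) *
      ennreal (gauss_pair_kernel t (z - c)) \<partial>lborel)"
  proof (rule nn_integral_cong)
    fix z :: "'a \<times> 'a"
    show "ennreal (gauss_kernel (fst z - a) * gauss_kernel (snd z - b) *
        exp (- t * (norm (fst z - snd z))\<^sup>2)) =
      ennreal (exp (- (t / (4 * t + 1)) * (norm (a - b))\<^sup>2)) * ennreal (gauss_pair_kernel t (z - c))"
      using gauss_kernel_pair_shift[OF assms, of "fst z" a "snd z" b]
      by (simp add: c_def \<beta>_def ennreal_mult gauss_pair_kernel_pos less_imp_le)
  qed
  also have "\<dots> = ennreal (exp (- (t / (4 * t + 1)) * (norm (a - b))\<^sup>2)) *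
      (\<integral>\<^sup>+z. ennreal (gauss_pair_kernel t (z - c)) \<partial>lborel)"
    by (rule nn_integral_cmult) measurable
  also have "(\<integral>\<^sup>+z. ennreal (gauss_pair_kernel t (z - c)) \<partial>lborel) =
      (\<integral>\<^sup>+z. ennreal (gauss_pair_kernel t z) \<partial>(lborel :: ('a \<times> 'a) measure))"
    by (rule nn_integral_lborel_translate) measurable
  finally show ?thesis .
qed

lemma gauss_kernel_eq_prod_Basis:
  "gauss_kernel (x::'a::euclidean_space) = (\<Prod>b\<in>Basis. gauss_kernel (x \<bullet> b))"
  unfolding gauss_kernel_def power2_norm_eq_inner
  by (subst euclidean_inner) (simp add: exp_sum sum_distrib_left power2_eq_square)

lemma nn_integral_gauss_kernel_finite:
  "(\<integral>\<^sup>+x. ennreal (gauss_kernel x) \<partial>(lborel::'a::euclidean_space measure)) < \<infinity>"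
proof -
  have "integrable lborel (\<lambda>u. sqrt (2 * pi) * normal_density 0 1 u)"
    by simp
  moreover have "sqrt (2 * pi) * normal_density 0 1 u = gauss_kernel u" for u :: real
    by (simp add: normal_density_def gauss_kernel_def)
  ultimately have "integrable lborel (gauss_kernel :: real \<Rightarrow> real)"
    by simp
  from integrableD(2)[OF this]
  have finite_1: "(\<integral>\<^sup>+u. ennreal (gauss_kernel u) \<partial>(lborel::real measure)) < \<infinity>"
    by (simp add: gauss_kernel_pos abs_of_pos less_top)
  have "(\<integral>\<^sup>+x. ennreal (gauss_kernel x) \<partial>(lborel::'a measure)) =
      (\<integral>\<^sup>+x. (\<Prod>b\<in>Basis. ennreal (gauss_kernel ((x::'a) \<bullet> b))) \<partial>lborel)"
    by (intro nn_integral_cong, subst gauss_kernel_eq_prod_Basis)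
      (simp add: prod_ennreal gauss_kernel_pos less_imp_le)
  also have "\<dots> = (\<Prod>b\<in>(Basis::'a set). (\<integral>\<^sup>+u. ennreal (gauss_kernel (u::real)) \<partial>lborel))"
    by (rule nn_integral_lborel_prod) auto
  also have "\<dots> < \<infinity>"
    using finite_1 by (simp add: ennreal_prod_eq_top less_top[symmetric] power_eq_top_ennreal)
  finally show ?thesis .
qed

lemma nn_integral_gauss_pair_kernel_finite:
  assumes "t \<ge> 0"
  shows "(\<integral>\<^sup>+z. ennreal (gauss_pair_kernel t z) \<partial>(lborel :: ('a::euclidean_space \<times> 'a) measure)) < \<infinity>"
proof -
  have "gauss_pair_kernel t z \<le> gauss_kernel z" for z :: "'a \<times> 'a"
  proof -
    have "gauss_kernel z = gauss_kernel (fst z) * gauss_kernel (snd z)"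
      by (cases z) (simp add: gauss_kernel_def norm_Pair mult_exp_exp algebra_simps)
    then show ?thesis
      using assms by (simp add: gauss_pair_kernel_def gauss_kernel_pos mult_nonneg_nonneg)
  qed
  then have "(\<integral>\<^sup>+z. ennreal (gauss_pair_kernel t z) \<partial>(lborel :: ('a \<times> 'a) measure)) \<le>
      (\<integral>\<^sup>+z. ennreal (gauss_kernel z) \<partial>(lborel :: ('a \<times> 'a) measure))"
    by (intro nn_integral_mono ennreal_leI)
  also have "\<dots> < \<infinity>"
    by (rule nn_integral_gauss_kernel_finite)
  finally show ?thesis .
qed

lemma nn_integral_gauss_pair_kernel_nonzero:
  "(\<integral>\<^sup>+z. ennreal (gauss_pair_kernel t z) \<partial>(lborel :: ('a::euclidean_space \<times> 'a) measure)) \<noteq> 0"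
proof -
  have "{z :: 'a \<times> 'a. ennreal (gauss_pair_kernel t z) \<noteq> 0} = UNIV"
    using gauss_pair_kernel_pos by (auto simp: ennreal_eq_0_iff not_le)
  then show ?thesis
    by (subst nn_integral_0_iff) (simp_all add: emeasure_lborel_UNIV)
qed

section \<open>The Laplace transform of the distribution of distances\<close>

lemma nn_integral_dist_distr:
  fixes \<rho> :: "'a::euclidean_space \<Rightarrow> real" and f :: "real \<Rightarrow> ennreal"
  assumes [measurable]: "\<rho> \<in> borel_measurable borel" "f \<in> borel_measurable borel"
  shows "(\<integral>\<^sup>+u. f u \<partial>dist_distr \<rho>) =
    (\<integral>\<^sup>+z. ennreal (\<rho> (fst z)) * ennreal (\<rho> (snd z)) * f ((norm (fst z - snd z))\<^sup>2) \<partial>lborel)"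
proof -
  let ?D = "density lborel (\<lambda>x. ennreal (\<rho> x))"
  have [measurable]: "(\<lambda>z::'a \<times> 'a. (norm (fst z - snd z))\<^sup>2) \<in> borel_measurable borel"
    by (intro borel_measurable_continuous_onI continuous_intros)
  have [measurable]: "(\<lambda>z::'a \<times> 'a. \<rho> (fst z)) \<in> borel_measurable borel"
    "(\<lambda>z::'a \<times> 'a. \<rho> (snd z)) \<in> borel_measurable borel"
    unfolding borel_prod[symmetric] by measurable
  have "(\<integral>\<^sup>+u. f u \<partial>dist_distr \<rho>) = (\<integral>\<^sup>+z. f (case z of (x, y) \<Rightarrow> (norm (x - y))\<^sup>2) \<partial>(?D \<Otimes>\<^sub>M ?D))"
    unfolding dist_distr_def by (subst nn_integral_distr) auto
  also have "?D \<Otimes>\<^sub>M ?D = density lborel (\<lambda>(x, y). ennreal (\<rho> x) * ennreal (\<rho> y))"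
  proof -
    have "sigma_finite_measure ?D"
      by (subst sigma_finite_measure.sigma_finite_iff_density_finite[OF sigma_finite_lborel]) auto
    then show ?thesis
      unfolding lborel_prod[symmetric]
      by (intro pair_measure_density) (auto intro: lborel.sigma_finite_measure_axioms)
  qed
  finally show ?thesis
    by (subst (asm) nn_integral_density) (auto simp: case_prod_beta')
qed

definition pair_exp_sum :: "nat \<Rightarrow> (nat \<Rightarrow> real) \<Rightarrow> (nat \<Rightarrow> 'a::metric_space) \<Rightarrow> real \<Rightarrow> real" where
  "pair_exp_sum k w m s = (\<Sum>i<k. \<Sum>j<k. w i * w j * exp (- s * (dist (m i) (m j))\<^sup>2))"

lemma nn_integral_exp_dist_distr_gauss_mix:
  fixes m :: "nat \<Rightarrow> 'a::euclidean_space"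
  assumes t: "4 * t + 1 \<noteq> 0" and w: "\<forall>i<k. w i \<ge> 0"
  shows "(\<integral>\<^sup>+u. ennreal (exp (- t * u)) \<partial>dist_distr (gauss_mix k w m)) =
    ennreal (pair_exp_sum k w m (t / (4 * t + 1)) / (2 * pi) ^ DIM('a)) *
    (\<integral>\<^sup>+z. ennreal (gauss_pair_kernel t z) \<partial>(lborel :: ('a \<times> 'a) measure))"
proof -
  define c where "c i = w i / sqrt ((2 * pi) ^ DIM('a))" for i
  have c: "c i \<ge> 0" if "i < k" for i
    using w that by (simp add: c_def)
  define K where "K = (\<integral>\<^sup>+z. ennreal (gauss_pair_kernel t z) \<partial>(lborel :: ('a \<times> 'a) measure))"
  define G where "G i j z = ennreal (gauss_kernel (fst z - m i) * gauss_kernel (snd z - m j) *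
    exp (- t * (norm (fst z - snd z))\<^sup>2))" for i j and z :: "'a \<times> 'a"
  define F where "F i j = c i * c j * exp (- (t / (4 * t + 1)) * (dist (m i) (m j))\<^sup>2)" for i j
  have [measurable]: "G i j \<in> borel_measurable borel" for i j
    unfolding G_def gauss_kernel_def by (intro measurable_compose[OF _ measurable_ennreal]
      borel_measurable_continuous_onI continuous_intros)
  have mix: "ennreal (gauss_mix k w m x) = (\<Sum>i<k. ennreal (c i) * ennreal (gauss_kernel (x - m i)))" for x
  proof -
    have "ennreal (gauss_mix k w m x) = (\<Sum>i<k. ennreal (c i * gauss_kernel (x - m i)))"
      using w unfolding c_def
      by (subst sum_ennreal) (auto simp: gauss_mix_eq_sum_gauss_kernel gauss_kernel_pos less_imp_le
          intro!: divide_nonneg_nonneg mult_nonneg_nonneg)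
    also have "\<dots> = (\<Sum>i<k. ennreal (c i) * ennreal (gauss_kernel (x - m i)))"
      using c by (simp add: ennreal_mult')
    finally show ?thesis .
  qed
  have "(\<integral>\<^sup>+u. ennreal (exp (- t * u)) \<partial>dist_distr (gauss_mix k w m)) =
      (\<integral>\<^sup>+z. ennreal (gauss_mix k w m (fst z)) * ennreal (gauss_mix k w m (snd z)) *
        ennreal (exp (- t * (norm (fst z - snd z))\<^sup>2)) \<partial>lborel)"
    by (rule nn_integral_dist_distr) measurable
  also have "\<dots> = (\<integral>\<^sup>+z. (\<Sum>i<k. \<Sum>j<k. ennreal (c i) * ennreal (c j) * G i j z) \<partial>lborel)"
  proof (rule nn_integral_cong)
    fix z :: "'a \<times> 'a"
    have "ennreal (gauss_mix k w m (fst z)) * ennreal (gauss_mix k w m (snd z)) =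
        (\<Sum>i<k. \<Sum>j<k. ennreal (c i) * ennreal (gauss_kernel (fst z - m i)) *
          (ennreal (c j) * ennreal (gauss_kernel (snd z - m j))))"
      by (simp only: mix sum_product)
    then show "ennreal (gauss_mix k w m (fst z)) * ennreal (gauss_mix k w m (snd z)) *
        ennreal (exp (- t * (norm (fst z - snd z))\<^sup>2)) =
      (\<Sum>i<k. \<Sum>j<k. ennreal (c i) * ennreal (c j) * G i j z)"
      by (simp add: G_def sum_distrib_left sum_distrib_right ennreal_mult' gauss_kernel_pos less_imp_le mult_ac)
  qed
  also have "\<dots> = (\<Sum>i<k. \<Sum>j<k. ennreal (c i) * ennreal (c j) * (\<integral>\<^sup>+z. G i j z \<partial>lborel))"
    by (simp add: nn_integral_sum nn_integral_cmult)
  also have "\<dots> = (\<Sum>i<k. \<Sum>j<k. ennreal (F i j) * K)"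
  proof (intro sum.cong refl)
    fix i j assume "i \<in> {..<k}" "j \<in> {..<k}"
    then show "ennreal (c i) * ennreal (c j) * (\<integral>\<^sup>+z. G i j z \<partial>lborel) = ennreal (F i j) * K"
      using c nn_integral_gauss_pair_shift[OF t, of "m i" "m j"]
      by (simp add: F_def G_def K_def ennreal_mult' dist_norm mult.assoc)
  qed
  also have "\<dots> = ennreal (\<Sum>i<k. \<Sum>j<k. F i j) * K"
  proof -
    have "F i j \<ge> 0" if "i < k" "j < k" for i j
      using c that by (simp add: F_def)
    then have "(\<Sum>j<k. ennreal (F i j)) = ennreal (\<Sum>j<k. F i j)" if "i < k" for i
      using that by (intro sum_ennreal) simp
    moreover have "(\<Sum>i<k. ennreal (\<Sum>j<k. F i j)) = ennreal (\<Sum>i<k. \<Sum>j<k. F i j)"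
      using \<open>\<And>i j. i < k \<Longrightarrow> j < k \<Longrightarrow> F i j \<ge> 0\<close> by (intro sum_ennreal sum_nonneg) simp
    ultimately show ?thesis
      by (simp flip: sum_distrib_right)
  qed
  also have "(\<Sum>i<k. \<Sum>j<k. F i j) = pair_exp_sum k w m (t / (4 * t + 1)) / (2 * pi) ^ DIM('a)"
    by (simp add: F_def pair_exp_sum_def c_def sum_divide_distrib)
  finally show ?thesis
    unfolding K_def .
qed

lemma pair_exp_sum_nonneg: "\<forall>i<k. w i \<ge> 0 \<Longrightarrow> pair_exp_sum k w m s \<ge> 0"
  unfolding pair_exp_sum_def by (auto intro!: sum_nonneg)

lemma pair_exp_sum_eq_if_dist_distr_eq:
  fixes \<mu> \<nu> :: "nat \<Rightarrow> 'a::euclidean_space"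
  assumes w: "\<forall>i<k. w i \<ge> 0" and w': "\<forall>i<k. w' i \<ge> 0"
    and eq: "dist_distr (gauss_mix k w \<mu>) = dist_distr (gauss_mix k w' \<nu>)"
    and s: "0 < s" "s < 1/4"
  shows "pair_exp_sum k w \<mu> s = pair_exp_sum k w' \<nu> s"
proof -
  define t where "t = s / (1 - 4 * s)"
  have "t \<ge> 0" "4 * t + 1 \<noteq> 0" and s_eq: "t / (4 * t + 1) = s"
    using s by (auto simp: t_def field_simps)
  define K where "K = (\<integral>\<^sup>+z. ennreal (gauss_pair_kernel t z) \<partial>(lborel :: ('a \<times> 'a) measure))"
  have "K \<noteq> 0" "K \<noteq> \<top>"
    using nn_integral_gauss_pair_kernel_nonzero[where 'a='a]
      nn_integral_gauss_pair_kernel_finite[OF \<open>t \<ge> 0\<close>, where 'a='a]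
    by (auto simp: K_def)
  have "ennreal (pair_exp_sum k w \<mu> s / (2 * pi) ^ DIM('a)) * K =
      ennreal (pair_exp_sum k w' \<nu> s / (2 * pi) ^ DIM('a)) * K"
    using nn_integral_exp_dist_distr_gauss_mix[OF \<open>4 * t + 1 \<noteq> 0\<close>, of k w \<mu>]
      nn_integral_exp_dist_distr_gauss_mix[OF \<open>4 * t + 1 \<noteq> 0\<close>, of k w' \<nu>] w w' eq
    by (simp add: K_def s_eq)
  then have "ennreal (pair_exp_sum k w \<mu> s / (2 * pi) ^ DIM('a)) =
      ennreal (pair_exp_sum k w' \<nu> s / (2 * pi) ^ DIM('a))"
    using mult_divide_eq_ennreal[OF \<open>K \<noteq> 0\<close> \<open>K \<noteq> \<top>\<close>] by metis
  then have "pair_exp_sum k w \<mu> s / (2 * pi) ^ DIM('a) = pair_exp_sum k w' \<nu> s / (2 * pi) ^ DIM('a)"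
    using pair_exp_sum_nonneg[OF w] pair_exp_sum_nonneg[OF w'] by (subst (asm) ennreal_inj) (auto intro!: divide_nonneg_pos)
  then show ?thesis
    by simp
qed

section \<open>Linear independence of exponentials\<close>

lemma exp_sum_eq_0_imp_coeffs_eq_0:
  fixes A :: "real set" and c :: "real \<Rightarrow> real"
  assumes "finite A" "l < u" "\<And>s. s \<in> {l<..<u} \<Longrightarrow> (\<Sum>x\<in>A. c x * exp (- (s * x))) = 0"
  shows "\<forall>x\<in>A. c x = 0"
  using assms(1,3)
proof (induction A arbitrary: c rule: finite_induct)
  case empty
  then show ?case by simp
next
  case (insert x0 A)
  let ?F = "\<lambda>s. (\<Sum>x\<in>insert x0 A. c x * exp (- (s * x)))"
  have deriv_0: "(\<Sum>x\<in>insert x0 A. c x * (exp (- (s * x)) * (- x))) = 0" if s: "s \<in> {l<..<u}" for s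
  proof -
    have "(?F has_field_derivative (\<Sum>x\<in>insert x0 A. c x * (exp (- (s * x)) * (- x)))) (at s)"
      by (auto intro!: derivative_eq_intros sum.cong simp: mult_ac)
    moreover have "(?F has_field_derivative 0) (at s)"
      by (rule has_field_derivative_transform_within_open[of "\<lambda>_. 0" 0 s "{l<..<u}"])
        (use s insert.prems in auto)
    ultimately show ?thesis
      by (rule DERIV_unique)
  qed
  \<comment> \<open>The combination \<open>x0 F - F'\<close> kills the exponential with exponent \<open>x0\<close>.\<close>
  have "(\<Sum>x\<in>A. (c x * (x0 - x)) * exp (- (s * x))) = 0" if s: "s \<in> {l<..<u}" for s
  proof -
    have "(\<Sum>x\<in>A. (c x * (x0 - x)) * exp (- (s * x))) =
        x0 * ?F s + (\<Sum>x\<in>insert x0 A. c x * (exp (- (s * x)) * (- x)))"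
      using insert.hyps
      by (simp add: sum_distrib_left sum.distrib[symmetric] algebra_simps)
    then show ?thesis
      using deriv_0[OF s] insert.prems[OF s] by simp
  qed
  with insert.IH have "\<forall>x\<in>A. c x * (x0 - x) = 0" .
  then have "\<forall>x\<in>A. c x = 0"
    using insert.hyps by auto
  moreover obtain s where s: "s \<in> {l<..<u}"
    using \<open>l < u\<close> dense by auto
  ultimately have "c x0 = 0"
    using insert.prems[OF s] insert.hyps by simp
  with \<open>\<forall>x\<in>A. c x = 0\<close> show ?case by simp
qed

definition dist_weight :: "nat \<Rightarrow> (nat \<Rightarrow> real) \<Rightarrow> (nat \<Rightarrow> 'a::metric_space) \<Rightarrow> real \<Rightarrow> real" where
  "dist_weight k w m a = (\<Sum>(i, j) \<in> {(i, j) \<in> {..<k} \<times> {..<k}. (dist (m i) (m j))\<^sup>2 = a}. w i * w j)"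

lemma pair_exp_sum_eq_sum_dist_weight:
  assumes "finite A" "(\<lambda>(i, j). (dist (m i) (m j))\<^sup>2) ` ({..<k} \<times> {..<k}) \<subseteq> A"
  shows "pair_exp_sum k w m s = (\<Sum>a\<in>A. dist_weight k w m a * exp (- (s * a)))"
proof -
  have "pair_exp_sum k w m s = (\<Sum>(i, j) \<in> {..<k} \<times> {..<k}. w i * w j * exp (- (s * (dist (m i) (m j))\<^sup>2)))"
    by (simp add: pair_exp_sum_def sum.cartesian_product)
  also have "\<dots> = (\<Sum>a\<in>A. \<Sum>(i, j) \<in> {(i, j) \<in> {..<k} \<times> {..<k}. (dist (m i) (m j))\<^sup>2 = a}.
      w i * w j * exp (- (s * (dist (m i) (m j))\<^sup>2)))"
    using assms by (subst sum.group[symmetric, where g = "\<lambda>(i, j). (dist (m i) (m j))\<^sup>2"])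
      (auto simp: case_prod_beta intro!: sum.cong)
  also have "\<dots> = (\<Sum>a\<in>A. dist_weight k w m a * exp (- (s * a)))"
    unfolding dist_weight_def sum_distrib_right by (intro sum.cong refl) auto
  finally show ?thesis .
qed

lemma dist_weight_eq_if_pair_exp_sum_eq:
  fixes \<mu> \<nu> :: "nat \<Rightarrow> 'a::metric_space"
  assumes "l < u" and eq: "\<And>s. s \<in> {l<..<u} \<Longrightarrow> pair_exp_sum k w \<mu> s = pair_exp_sum k w' \<nu> s"
  shows "dist_weight k w \<mu> = dist_weight k w' \<nu>"
proof
  fix a
  define A where "A = (\<lambda>(i, j). (dist (\<mu> i) (\<mu> j))\<^sup>2) ` ({..<k} \<times> {..<k}) \<union>
    (\<lambda>(i, j). (dist (\<nu> i) (\<nu> j))\<^sup>2) ` ({..<k} \<times> {..<k})"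
  have "finite A"
    by (simp add: A_def)
  have "\<forall>a\<in>A. dist_weight k w \<mu> a - dist_weight k w' \<nu> a = 0"
  proof (rule exp_sum_eq_0_imp_coeffs_eq_0[OF \<open>finite A\<close> \<open>l < u\<close>])
    fix s assume "s \<in> {l<..<u}"
    then show "(\<Sum>a\<in>A. (dist_weight k w \<mu> a - dist_weight k w' \<nu> a) * exp (- (s * a))) = 0"
      using eq pair_exp_sum_eq_sum_dist_weight[OF \<open>finite A\<close>, of \<mu> k w s]
        pair_exp_sum_eq_sum_dist_weight[OF \<open>finite A\<close>, of \<nu> k w' s]
      by (simp add: A_def left_diff_distrib sum_subtractf)
  qed
  moreover have "dist_weight k w \<mu> a = 0" "dist_weight k w' \<nu> a = 0" if "a \<notin> A"
    using that unfolding dist_weight_def A_def by (auto intro!: sum.neutral)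
  ultimately show "dist_weight k w \<mu> a = dist_weight k w' \<nu> a"
    by (cases "a \<in> A") auto
qed

section \<open>Matching the means and the weights\<close>

definition dists_determine_pairs :: "nat \<Rightarrow> (nat \<Rightarrow> 'a::metric_space) \<Rightarrow> bool" where
  "dists_determine_pairs k m \<longleftrightarrow>
    (\<forall>i<k. \<forall>j<k. \<forall>i'<k. \<forall>j'<k. i \<noteq> j \<longrightarrow> dist (m i') (m j') = dist (m i) (m j) \<longrightarrow>
      (i', j') = (i, j) \<or> (i', j') = (j, i))"

lemma exists_two_other_indices:
  assumes "3 \<le> k" "i < (k::nat)"
  obtains j l where "j < k" "l < k" "j \<noteq> i" "l \<noteq> i" "j \<noteq> l"
proof -
  have "(i + 1) mod 3 < k" "(i + 2) mod 3 < k" "(i + 1) mod 3 \<noteq> i" "(i + 2) mod 3 \<noteq> i"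
    "(i + 1) mod 3 \<noteq> (i + 2) mod 3"
    using assms by presburger+
  then show ?thesis
    using that by blast
qed

lemma dists_determine_pairs_dist_pos:
  assumes "dists_determine_pairs k m" "i < k" "j < k" "i \<noteq> j"
  shows "dist (m i) (m j) > 0"
  using assms unfolding dists_determine_pairs_def by (metis dist_self prod.inject zero_less_dist_iff)

lemma dists_determine_pairs_if_inj_on:
  assumes "3 \<le> k" and inj: "inj_on (\<lambda>(i, j). dist (m i) (m j)) {(i, j). i < j \<and> j < k}"
  shows "dists_determine_pairs k m"
proof -
  have same_pair: "(i', j') = (i, j) \<or> (i', j') = (j, i)"
    if "i < k" "j < k" "i' < k" "j' < k" "i \<noteq> j" "i' \<noteq> j'" "dist (m i') (m j') = dist (m i) (m j)"
    for i j i' j'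
  proof -
    have "(min i' j', max i' j') = (min i j, max i j)"
      using that by (intro inj_onD[OF inj]) (auto simp: min_def max_def dist_commute)
    then show ?thesis
      using that by (auto simp: min_def max_def split: if_splits)
  qed
  have "m i \<noteq> m j" if "i < k" "j < k" "i \<noteq> j" for i j
  proof
    assume "m i = m j"
    obtain l where "l < k" "l \<noteq> i" "l \<noteq> j"
      using exists_two_other_indices[OF \<open>3 \<le> k\<close> \<open>i < k\<close>] that by metis
    then show False
      using same_pair[of i l j l] that \<open>m i = m j\<close> by auto
  qed
  then show ?thesis
    unfolding dists_determine_pairs_def using same_pair by (metis dist_eq_0_iff)
qed

lemma dist_weight_dist:
  assumes "dists_determine_pairs k m" "i < k" "j < k" "i \<noteq> j"
  shows "dist_weight k w m ((dist (m i) (m j))\<^sup>2) = 2 * w i * w j"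
proof -
  have "{(a, b) \<in> {..<k} \<times> {..<k}. (dist (m a) (m b))\<^sup>2 = (dist (m i) (m j))\<^sup>2} = {(i, j), (j, i)}"
    using assms by (auto simp: dists_determine_pairs_def power2_eq_iff_nonneg dist_commute)
  then show ?thesis
    using assms(4) by (simp add: dist_weight_def)
qed

lemma image_mset_mset_set_eq_if_inj_on:
  assumes "finite P" "inj_on f P" and match: "\<And>p. p \<in> P \<Longrightarrow> \<exists>q\<in>P. g q = f p"
  shows "image_mset g (mset_set P) = image_mset f (mset_set P)"
proof -
  obtain \<tau> where \<tau>: "\<And>p. p \<in> P \<Longrightarrow> \<tau> p \<in> P \<and> g (\<tau> p) = f p"
    using match by metis
  have "inj_on \<tau> P"
    using \<tau> \<open>inj_on f P\<close> by (metis inj_on_def)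
  moreover have "\<tau> ` P = P"
    using \<tau> \<open>finite P\<close> \<open>inj_on \<tau> P\<close> by (meson card_image card_subset_eq image_subsetI)
  ultimately have "mset_set P = image_mset \<tau> (mset_set P)"
    by (simp add: image_mset_mset_set)
  then have "image_mset g (mset_set P) = image_mset (g \<circ> \<tau>) (mset_set P)"
    by (metis multiset.map_comp)
  also have "\<dots> = image_mset f (mset_set P)"
    using \<tau> \<open>finite P\<close> by (intro image_mset_cong) auto
  finally show ?thesis .
qed

lemma pair_dists_eq_if_dist_weight_eq:
  fixes \<mu> \<nu> :: "nat \<Rightarrow> 'a::euclidean_space"
  assumes \<mu>: "dists_determine_pairs k \<mu>"
    and inj: "inj_on (\<lambda>(i, j). dist (\<mu> i) (\<mu> j)) {(i, j). i < j \<and> j < k}"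
    and w: "\<forall>i<k. w i > 0" and eq: "dist_weight k w' \<nu> = dist_weight k w \<mu>"
  shows "pair_dists k \<nu> = pair_dists k \<mu>"
  unfolding pair_dists_def
proof (rule image_mset_mset_set_eq_if_inj_on[OF _ inj])
  show "finite {(i, j). i < j \<and> j < k}"
    by (rule finite_subset[of _ "{..<k} \<times> {..<k}"]) auto
  fix p assume "p \<in> {(i, j). i < j \<and> j < k}"
  then obtain i j where p: "p = (i, j)" "i < j" "j < k"
    by auto
  have "w i > 0" "w j > 0"
    using w p by auto
  then have "dist_weight k w' \<nu> ((dist (\<mu> i) (\<mu> j))\<^sup>2) \<noteq> 0"
    using dist_weight_dist[OF \<mu>, of i j w] p eq by simp
  then have "{(a, b) \<in> {..<k} \<times> {..<k}. (dist (\<nu> a) (\<nu> b))\<^sup>2 = (dist (\<mu> i) (\<mu> j))\<^sup>2} \<noteq> {}"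
    unfolding dist_weight_def by (metis sum.empty)
  then obtain a b where ab: "a < k" "b < k" "dist (\<nu> a) (\<nu> b) = dist (\<mu> i) (\<mu> j)"
    by (auto simp: power2_eq_iff_nonneg)
  moreover have "a \<noteq> b"
    using ab dists_determine_pairs_dist_pos[OF \<mu>, of i j] p by auto
  ultimately show "\<exists>q\<in>{(i, j). i < j \<and> j < k}. (\<lambda>(i, j). dist (\<nu> i) (\<nu> j)) q =
      (\<lambda>(i, j). dist (\<mu> i) (\<mu> j)) p"
    using p by (intro bexI[of _ "(min a b, max a b)"]) (auto simp: min_def max_def dist_commute)
qed

lemma dists_determine_pairs_congruent:
  assumes \<mu>: "dists_determine_pairs k \<mu>" and \<sigma>: "bij_betw \<sigma> {..<k} {..<k}"
    and dist: "\<And>i j. i < k \<Longrightarrow> j < k \<Longrightarrow> dist (\<nu> i) (\<nu> j) = dist (\<mu> (\<sigma> i)) (\<mu> (\<sigma> j))"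
  shows "dists_determine_pairs k \<nu>"
  unfolding dists_determine_pairs_def
proof (intro allI impI)
  fix i j i' j'
  assume ij: "i < k" "j < k" "i' < k" "j' < k" "i \<noteq> j" "dist (\<nu> i') (\<nu> j') = dist (\<nu> i) (\<nu> j)"
  have \<sigma>k: "\<sigma> a < k" if "a < k" for a
    using bij_betw_apply[OF \<sigma>] that by auto
  have \<sigma>inj: "\<sigma> a = \<sigma> b \<longleftrightarrow> a = b" if "a < k" "b < k" for a b
    using bij_betw_imp_inj_on[OF \<sigma>] that by (auto dest: inj_onD)
  have "dist (\<mu> (\<sigma> i')) (\<mu> (\<sigma> j')) = dist (\<mu> (\<sigma> i)) (\<mu> (\<sigma> j))" "\<sigma> i \<noteq> \<sigma> j"
    using ij dist \<sigma>inj by simp_all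
  then have "(\<sigma> i', \<sigma> j') = (\<sigma> i, \<sigma> j) \<or> (\<sigma> i', \<sigma> j') = (\<sigma> j, \<sigma> i)"
    using \<mu> \<sigma>k ij(1-4) unfolding dists_determine_pairs_def by blast
  then show "(i', j') = (i, j) \<or> (i', j') = (j, i)"
    using \<sigma>inj ij by auto
qed

lemma eq_if_pairwise_products_eq:
  fixes v w :: "nat \<Rightarrow> real"
  assumes "3 \<le> k" and v: "\<forall>i<k. v i > 0" and w: "\<forall>i<k. w i > 0"
    and prod: "\<And>i j. i < k \<Longrightarrow> j < k \<Longrightarrow> i \<noteq> j \<Longrightarrow> v i * v j = w i * w j"
    and "i < k"
  shows "v i = w i"
proof -
  obtain j l where jl: "j < k" "l < k" "j \<noteq> i" "l \<noteq> i" "j \<noteq> l"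
    using exists_two_other_indices[OF \<open>3 \<le> k\<close> \<open>i < k\<close>] .
  have "(v i)\<^sup>2 * (v j * v l) = (v i * v j) * (v i * v l)"
    by algebra
  also have "\<dots> = (w i)\<^sup>2 * (w j * w l)"
    using prod \<open>i < k\<close> jl by (simp add: power2_eq_square mult_ac)
  also have "w j * w l = v j * v l"
    using prod jl by simp
  finally have "(v i)\<^sup>2 * (v j * v l) = (w i)\<^sup>2 * (v j * v l)" .
  moreover have "v j > 0" "v l > 0"
    using v jl by auto
  ultimately have "(v i)\<^sup>2 = (w i)\<^sup>2"
    by simp
  then show ?thesis
    using v w \<open>i < k\<close> by (simp add: power2_eq_iff_nonneg less_imp_le)
qed

lemma rigid_motion_dist:
  assumes "rigid_motion g"
  shows "dist (g x) (g y) = dist x y"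
proof -
  obtain f b where f: "orthogonal_transformation f" and g: "\<And>x. g x = f x + b"
    using assms unfolding rigid_motion_def by blast
  then have "g x - g y = f (x - y)"
    by (simp add: orthogonal_transformation_linear linear_diff)
  then show ?thesis
    using f by (simp add: dist_norm orthogonal_transformation_norm)
qed

lemma gauss_mix_rigid_motion_reindex:
  assumes g: "rigid_motion g" and \<sigma>: "bij_betw \<sigma> {..<k} {..<k}"
    and \<nu>: "\<And>i. i < k \<Longrightarrow> \<nu> i = g (\<mu> (\<sigma> i))" and w': "\<And>i. i < k \<Longrightarrow> w' i = w (\<sigma> i)"
  shows "gauss_mix k w' \<nu> (g x) = gauss_mix k w \<mu> x"
proof -
  have "gauss_mix k w' \<nu> (g x) = (\<Sum>i<k. w (\<sigma> i) / sqrt ((2 * pi) ^ DIM('a)) * gauss_kernel (x - \<mu> (\<sigma> i)))"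
    unfolding gauss_mix_eq_sum_gauss_kernel
    using \<nu> w' rigid_motion_dist[OF g, of x] by (intro sum.cong) (auto simp: gauss_kernel_def dist_norm)
  also have "\<dots> = gauss_mix k w \<mu> x"
    unfolding gauss_mix_eq_sum_gauss_kernel
    by (rule sum.reindex_bij_betw[OF \<sigma>])
  finally show ?thesis .
qed

lemma gauss_mix_congruent_if_dist_weight_eq:
  fixes \<mu> \<nu> :: "nat \<Rightarrow> 'a::euclidean_space"
  assumes "3 \<le> k" and w: "\<forall>i<k. w i > 0" and w': "\<forall>i<k. w' i > 0"
    and inj: "inj_on (\<lambda>(i, j). dist (\<mu> i) (\<mu> j)) {(i, j). i < j \<and> j < k}"
    and "reconstructible k \<mu>" and eq: "dist_weight k w' \<nu> = dist_weight k w \<mu>"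
  shows "\<exists>g. rigid_motion g \<and> (\<forall>x. gauss_mix k w \<mu> x = gauss_mix k w' \<nu> (g x))"
proof -
  have \<mu>: "dists_determine_pairs k \<mu>"
    by (rule dists_determine_pairs_if_inj_on[OF \<open>3 \<le> k\<close> inj])
  obtain g \<sigma> where g: "rigid_motion g" and \<sigma>: "bij_betw \<sigma> {..<k} {..<k}"
    and \<nu>: "\<And>i. i < k \<Longrightarrow> g (\<mu> (\<sigma> i)) = \<nu> i"
    using \<open>reconstructible k \<mu>\<close> pair_dists_eq_if_dist_weight_eq[OF \<mu> inj w eq]
    unfolding reconstructible_def by blast
  have \<sigma>k: "\<sigma> i < k" if "i < k" for i
    using bij_betw_apply[OF \<sigma>] that by auto
  have \<sigma>inj: "\<sigma> i \<noteq> \<sigma> j" if "i < k" "j < k" "i \<noteq> j" for i j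
    using bij_betw_imp_inj_on[OF \<sigma>] that by (auto dest: inj_onD)
  have dist_\<nu>: "dist (\<nu> i) (\<nu> j) = dist (\<mu> (\<sigma> i)) (\<mu> (\<sigma> j))" if "i < k" "j < k" for i j
    using \<nu>[OF that(1), symmetric] \<nu>[OF that(2), symmetric] by (simp add: rigid_motion_dist[OF g])
  have \<nu>': "dists_determine_pairs k \<nu>"
    by (rule dists_determine_pairs_congruent[OF \<mu> \<sigma> dist_\<nu>])
  have "w' i * w' j = w (\<sigma> i) * w (\<sigma> j)" if "i < k" "j < k" "i \<noteq> j" for i j
  proof -
    have "2 * w' i * w' j = dist_weight k w' \<nu> ((dist (\<nu> i) (\<nu> j))\<^sup>2)"
      by (rule dist_weight_dist[OF \<nu>' that, symmetric])
    also have "\<dots> = dist_weight k w \<mu> ((dist (\<mu> (\<sigma> i)) (\<mu> (\<sigma> j)))\<^sup>2)"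
      using eq dist_\<nu>[OF that(1,2)] by simp
    also have "\<dots> = 2 * w (\<sigma> i) * w (\<sigma> j)"
      by (rule dist_weight_dist[OF \<mu> \<sigma>k[OF that(1)] \<sigma>k[OF that(2)] \<sigma>inj[OF that]])
    finally show ?thesis
      by simp
  qed
  moreover have "\<forall>i<k. w (\<sigma> i) > 0"
    using w \<sigma>k by auto
  ultimately have "w' i = w (\<sigma> i)" if "i < k" for i
    using eq_if_pairwise_products_eq[OF \<open>3 \<le> k\<close> w', of "\<lambda>i. w (\<sigma> i)"] that by blast
  then have "gauss_mix k w' \<nu> (g x) = gauss_mix k w \<mu> x" for x
    using \<nu> by (intro gauss_mix_rigid_motion_reindex[OF g \<sigma>]) auto
  then show ?thesis
    using g by auto
qed

theorem theorem4p1: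
  fixes k :: nat and w wb :: "nat \<Rightarrow> real" and \<mu> \<nu> :: "nat \<Rightarrow> 'a::euclidean_space"
  assumes "k \<ge> DIM('a) + 2"
    and "\<forall>i<k. w i > 0" and "(\<Sum>i<k. w i) = 1"
    and "inj_on (\<lambda>(i, j). dist (\<mu> i) (\<mu> j)) {(i, j). i < j \<and> j < k}"
    and "reconstructible k \<mu>"
    and "\<forall>i<k. wb i > 0" and "(\<Sum>i<k. wb i) = 1"
    and "dist_distr (gauss_mix k wb \<nu>) = dist_distr (gauss_mix k w \<mu>)"
  shows "\<exists>g. rigid_motion g \<and> (\<forall>x. gauss_mix k w \<mu> x = gauss_mix k wb \<nu> (g x))"
proof -
  have "3 \<le> k"
    using assms(1) DIM_positive[where 'a='a] by linarith
  moreover have "dist_weight k wb \<nu> = dist_weight k w \<mu>"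
  proof (rule dist_weight_eq_if_pair_exp_sum_eq[of 0 "1/4"])
    fix s :: real
    assume "s \<in> {0<..<1/4}"
    then show "pair_exp_sum k wb \<nu> s = pair_exp_sum k w \<mu> s"
      using assms(2,6,8) by (intro pair_exp_sum_eq_if_dist_distr_eq) (auto simp: less_imp_le)
  qed simp
  ultimately show ?thesis
    using gauss_mix_congruent_if_dist_weight_eq assms(2,4,5,6) by blast
qed

end
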